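(* Suppose a quantum algorithm makes $T$ queries to an input $X\in\{0,1\}^N$ and accepts $X$ with probability $p(X)$. Then $\operatorname{SumInf}[p]=O(T)$, with the implied constant absolute (independent of $N$ and the algorithm).
   Context: For $p:\{0,1\}^N\to[0,1]$ and $X\in\{0,1\}^N$, $X^i$ denotes $X$ with its $i$-th bit flipped. $\operatorname{Inf}_i[p]:=\mathbb{E}_{X\in\{0,1\}^N}[|p(X)-p(X^i)|]$ (uniform $X$), and $\operatorname{SumInf}[p]:=\sum_{i=1}^N\operatorname{Inf}_i[p]$. Queries are standard quantum queries to the bits of $X$. *)

theory Defs
  imports Complex_Main
begin

text \<open>Inputs X in {0,1}^N are bool lists of length N (bit i is X ! i, 0-indexed).\<close>

definition cube :: "nat \<Rightarrow> bool list set" where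
  "cube N = {xs. length xs = N}"

definition flip :: "bool list \<Rightarrow> nat \<Rightarrow> bool list" where
  "flip X i = X[i := \<not> X ! i]"

definition Inf :: "nat \<Rightarrow> nat \<Rightarrow> (bool list \<Rightarrow> real) \<Rightarrow> real" where
  "Inf N i p = (\<Sum>X\<in>cube N. \<bar>p X - p (flip X i)\<bar>) / 2 ^ N"

definition SumInf :: "nat \<Rightarrow> (bool list \<Rightarrow> real) \<Rightarrow> real" where
  "SumInf N p = (\<Sum>i<N. Inf N i p)"

text \<open>Computational basis: |i, b, w> with query index i < N, answer bit b,
  and workspace index w < M (M arbitrary). States are amplitude functions on the basis.\<close>

type_synonym qidx = "nat \<times> bool \<times> nat"

definition qbasis :: "nat \<Rightarrow> nat \<Rightarrow> qidx set" where
  "qbasis N M = {0..<N} \<times> UNIV \<times> {0..<M}"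

text \<open>Matrices as functions (row, column); application and unitarity on a finite basis S.\<close>
definition mat_app :: "qidx set \<Rightarrow> (qidx \<Rightarrow> qidx \<Rightarrow> complex) \<Rightarrow> (qidx \<Rightarrow> complex) \<Rightarrow> (qidx \<Rightarrow> complex)" where
  "mat_app S U v = (\<lambda>j. \<Sum>k\<in>S. U j k * v k)"

definition unitary_on :: "qidx set \<Rightarrow> (qidx \<Rightarrow> qidx \<Rightarrow> complex) \<Rightarrow> bool" where
  "unitary_on S U \<longleftrightarrow>
     (\<forall>j\<in>S. \<forall>l\<in>S. (\<Sum>k\<in>S. cnj (U k j) * U k l) = (if j = l then 1 else 0))"

definition query_op :: "bool list \<Rightarrow> (qidx \<Rightarrow> complex) \<Rightarrow> (qidx \<Rightarrow> complex)" where
  "query_op X v = (\<lambda>(i, b, w). v (i, b \<noteq> X ! i, w))"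

fun run :: "qidx set \<Rightarrow> (nat \<Rightarrow> qidx \<Rightarrow> qidx \<Rightarrow> complex) \<Rightarrow> bool list \<Rightarrow> (qidx \<Rightarrow> complex) \<Rightarrow> nat \<Rightarrow> (qidx \<Rightarrow> complex)" where
  "run S Us X psi0 0 = mat_app S (Us 0) psi0"
| "run S Us X psi0 (Suc t) = mat_app S (Us (Suc t)) (query_op X (run S Us X psi0 t))"

definition acc_prob :: "nat \<Rightarrow> nat \<Rightarrow> nat \<Rightarrow> (nat \<Rightarrow> qidx \<Rightarrow> qidx \<Rightarrow> complex) \<Rightarrow> (qidx \<Rightarrow> complex) \<Rightarrow> qidx set \<Rightarrow> bool list \<Rightarrow> real" where
  "acc_prob N M T Us psi0 A X = (\<Sum>k\<in>A. (cmod (run (qbasis N M) Us X psi0 T k))\<^sup>2)"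

definition query_alg :: "nat \<Rightarrow> nat \<Rightarrow> nat \<Rightarrow> (nat \<Rightarrow> qidx \<Rightarrow> qidx \<Rightarrow> complex) \<Rightarrow> (qidx \<Rightarrow> complex) \<Rightarrow> qidx set \<Rightarrow> bool" where
  "query_alg N M T Us psi0 A \<longleftrightarrow>
     (\<forall>t\<le>T. unitary_on (qbasis N M) (Us t)) \<and>
     (\<Sum>k\<in>qbasis N M. (cmod (psi0 k))\<^sup>2) = 1 \<and>
     A \<subseteq> qbasis N M"

end

theory Submission
  imports Defs
begin

text \<open>Hybrid argument with a bilinear twist. For inputs X and Y = X with bit i flipped,
  p(X) - p(Y) is the real part of \<open>\<langle>\<psi>\<^sub>X, P\<psi>\<^sub>X\<rangle> - \<langle>\<psi>\<^sub>Y, P\<psi>\<^sub>X\<rangle> - \<langle>\<psi>\<^sub>Y, P\<psi>\<^sub>Y\<rangle> + \<langle>\<psi>\<^sub>X, P\<psi>\<^sub>Y\<rangle>\<close>,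
  where P projects onto the accepting states. Running \<open>P\<psi>\<^sub>X\<close> backwards through the circuit
  (a contraction) telescopes each of the two differences into T terms, the t-th of which only
  sees how the two oracles act on the forward state of one input and the backward state of the
  other. The oracles differ only on the block of query register value i, so by AM-GM each term
  is at most the squared weight of the two states on that block. Summing over i uses each
  state's total weight, at most 1, once: the sum of influences is at most 4T.\<close>

section \<open>Inner products on a finite basis\<close>

definition inner_on :: "'a set \<Rightarrow> ('a \<Rightarrow> complex) \<Rightarrow> ('a \<Rightarrow> complex) \<Rightarrow> complex" where
  "inner_on S u v = (\<Sum>k\<in>S. cnj (u k) * v k)"

definition sqnorm_on :: "'a set \<Rightarrow> ('a \<Rightarrow> complex) \<Rightarrow> real" where
  "sqnorm_on S v = (\<Sum>k\<in>S. (cmod (v k))\<^sup>2)"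

definition mat_adj :: "(qidx \<Rightarrow> qidx \<Rightarrow> complex) \<Rightarrow> (qidx \<Rightarrow> qidx \<Rightarrow> complex)" where
  "mat_adj U = (\<lambda>j k. cnj (U k j))"

definition restrict_to :: "'a set \<Rightarrow> ('a \<Rightarrow> complex) \<Rightarrow> ('a \<Rightarrow> complex)" where
  "restrict_to A v = (\<lambda>k. if k \<in> A then v k else 0)"

lemma sqnorm_on_nonneg: "sqnorm_on S v \<ge> 0"
  unfolding sqnorm_on_def by (simp add: sum_nonneg)

lemma inner_on_self: "inner_on S v v = of_real (sqnorm_on S v)"
  unfolding inner_on_def sqnorm_on_def of_real_sum
  by (intro sum.cong refl) (metis complex_norm_square mult.commute)

lemma inner_on_commute: "inner_on S v u = cnj (inner_on S u v)"
  unfolding inner_on_def by (simp add: mult.commute)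

lemma inner_on_restrict_to:
  assumes "A \<subseteq> S" "finite S"
  shows "inner_on S u (restrict_to A v) = inner_on A u v"
proof -
  have "inner_on S u (restrict_to A v) = (\<Sum>k\<in>S. if k \<in> A then cnj (u k) * v k else 0)"
    unfolding inner_on_def restrict_to_def by (intro sum.cong) auto
  then show ?thesis
    unfolding inner_on_def using assms by (simp add: sum.inter_restrict[symmetric] Int_absorb1)
qed

lemma sqnorm_on_restrict_to_le: "sqnorm_on S (restrict_to A v) \<le> sqnorm_on S v"
  unfolding sqnorm_on_def restrict_to_def by (intro sum_mono) auto

lemma cmod_inner_on_le: "cmod (inner_on S u v) \<le> (sqnorm_on S u + sqnorm_on S v) / 2"
proof -
  have "cmod (inner_on S u v) \<le> (\<Sum>k\<in>S. cmod (u k) * cmod (v k))"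
    unfolding inner_on_def by (rule order_trans[OF norm_sum]) (simp add: norm_mult)
  also have "\<dots> \<le> (\<Sum>k\<in>S. ((cmod (u k))\<^sup>2 + (cmod (v k))\<^sup>2) / 2)"
  proof (rule sum_mono)
    fix k
    show "cmod (u k) * cmod (v k) \<le> ((cmod (u k))\<^sup>2 + (cmod (v k))\<^sup>2) / 2"
      using sum_squares_bound[of "cmod (u k)" "cmod (v k)"] by simp
  qed
  also have "\<dots> = (sqnorm_on S u + sqnorm_on S v) / 2"
    unfolding sqnorm_on_def by (simp add: sum_divide_distrib[symmetric] sum.distrib)
  finally show ?thesis .
qed

lemma inner_on_mat_app_left:
  "inner_on S (mat_app S U u) w = inner_on S u (mat_app S (mat_adj U) w)"
proof -
  have "inner_on S (mat_app S U u) w = (\<Sum>j\<in>S. \<Sum>k\<in>S. cnj (U j k) * cnj (u k) * w j)"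
    unfolding inner_on_def mat_app_def by (simp add: sum_distrib_right)
  also have "\<dots> = (\<Sum>k\<in>S. \<Sum>j\<in>S. cnj (U j k) * cnj (u k) * w j)"
    by (rule sum.swap)
  also have "\<dots> = inner_on S u (mat_app S (mat_adj U) w)"
    unfolding inner_on_def mat_app_def mat_adj_def by (simp add: sum_distrib_left mult_ac)
  finally show ?thesis .
qed

lemma mat_app_mat_adj_unitary:
  assumes "unitary_on S U" "finite S" "k \<in> S"
  shows "mat_app S (mat_adj U) (mat_app S U v) k = v k"
proof -
  have "mat_app S (mat_adj U) (mat_app S U v) k = (\<Sum>j\<in>S. \<Sum>l\<in>S. cnj (U j k) * U j l * v l)"
    unfolding mat_app_def mat_adj_def by (simp add: sum_distrib_left mult_ac)
  also have "\<dots> = (\<Sum>l\<in>S. (\<Sum>j\<in>S. cnj (U j k) * U j l) * v l)"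
    by (subst sum.swap) (simp add: sum_distrib_right)
  also have "\<dots> = (\<Sum>l\<in>S. if k = l then v l else 0)"
    using assms unfolding unitary_on_def by (intro sum.cong) auto
  finally show ?thesis using assms by simp
qed

lemma inner_on_unitary:
  assumes "unitary_on S U" "finite S"
  shows "inner_on S (mat_app S U u) (mat_app S U v) = inner_on S u v"
  unfolding inner_on_mat_app_left unfolding inner_on_def
  using mat_app_mat_adj_unitary[OF assms] by simp

lemma sqnorm_on_unitary:
  assumes "unitary_on S U" "finite S"
  shows "sqnorm_on S (mat_app S U v) = sqnorm_on S v"
  using inner_on_unitary[OF assms, of v v] by (simp add: inner_on_self)

text \<open>Only the columns of U are assumed orthonormal, so the adjoint is shown to be a
  contraction directly: \<open>\<parallel>U\<^sup>*w\<parallel>\<^sup>2 = \<langle>UU\<^sup>*w, w\<rangle> \<le> (\<parallel>U\<^sup>*w\<parallel>\<^sup>2 + \<parallel>w\<parallel>\<^sup>2)/2\<close>.\<close>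

lemma sqnorm_on_mat_adj_le:
  assumes "unitary_on S U" "finite S"
  shows "sqnorm_on S (mat_app S (mat_adj U) w) \<le> sqnorm_on S w"
proof -
  define z where "z = mat_app S (mat_adj U) w"
  have "of_real (sqnorm_on S z) = inner_on S (mat_app S U z) w"
    by (simp add: inner_on_mat_app_left inner_on_self z_def)
  then have "sqnorm_on S z = cmod (inner_on S (mat_app S U z) w)"
    by (metis norm_of_real abs_of_nonneg sqnorm_on_nonneg)
  also have "\<dots> \<le> (sqnorm_on S z + sqnorm_on S w) / 2"
    using cmod_inner_on_le sqnorm_on_unitary[OF assms] by metis
  finally show ?thesis unfolding z_def by simp
qed

section \<open>The query operator\<close>

definition query_perm :: "bool list \<Rightarrow> qidx \<Rightarrow> qidx" where
  "query_perm X k = (fst k, fst (snd k) \<noteq> X ! fst k, snd (snd k))"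

fun answer_flip :: "qidx \<Rightarrow> qidx" where
  "answer_flip (i, b, w) = (i, \<not> b, w)"

definition qblock :: "nat \<Rightarrow> nat \<Rightarrow> qidx set" where
  "qblock M i = {i} \<times> UNIV \<times> {0..<M}"

lemma finite_qbasis [simp]: "finite (qbasis N M)"
  unfolding qbasis_def by simp

lemma query_op_eq: "query_op X v = v \<circ> query_perm X"
  unfolding query_op_def query_perm_def by (auto simp: fun_eq_iff split: prod.splits)

lemma sum_qbasis_query_perm:
  "(\<Sum>k\<in>qbasis N M. f (query_perm X k)) = (\<Sum>k\<in>qbasis N M. f k)"
  by (rule sum.reindex_bij_witness[where i="query_perm X" and j="query_perm X"])
     (auto simp: query_perm_def qbasis_def)

lemma sum_qblock_answer_flip:
  "(\<Sum>k\<in>qblock M i. f (answer_flip k)) = (\<Sum>k\<in>qblock M i. f k)"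
  by (rule sum.reindex_bij_witness[where i=answer_flip and j=answer_flip])
     (auto simp: qblock_def)

lemma inner_on_query_op:
  "inner_on (qbasis N M) (query_op X u) v = inner_on (qbasis N M) u (query_op X v)"
proof -
  have "query_perm X (query_perm X k) = k" for k
    unfolding query_perm_def by (cases k) auto
  then have "inner_on (qbasis N M) u (query_op X v)
               = (\<Sum>k\<in>qbasis N M. cnj (u (query_perm X k)) * v k)"
    unfolding inner_on_def query_op_eq o_def
    using sum_qbasis_query_perm[where f="\<lambda>k. cnj (u k) * v (query_perm X k)" and X=X] by simp
  then show ?thesis
    unfolding inner_on_def query_op_eq by simp
qed

lemma sqnorm_on_query_op:
  "sqnorm_on (qbasis N M) (query_op X v) = sqnorm_on (qbasis N M) v"
  unfolding sqnorm_on_def query_op_eq o_def by (rule sum_qbasis_query_perm)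

lemma sqnorm_on_qbasis_eq_sum_qblock:
  "sqnorm_on (qbasis N M) v = (\<Sum>i<N. sqnorm_on (qblock M i) v)"
proof -
  have "qbasis N M = (\<Union>i<N. qblock M i)"
    unfolding qbasis_def qblock_def by auto
  then have "sqnorm_on (qbasis N M) v = sqnorm_on (\<Union>i<N. qblock M i) v"
    by simp
  also have "\<dots> = (\<Sum>i<N. sqnorm_on (qblock M i) v)"
    unfolding sqnorm_on_def by (rule sum.UNION_disjoint) (auto simp: qblock_def)
  finally show ?thesis .
qed

lemma cmod_query_op_flip_diff:
  assumes "i < length X"
  shows "cmod (query_op X v k - query_op (flip X i) v k)
           = (if fst k = i then cmod (v k - v (answer_flip k)) else 0)"
  using assms
  by (cases k; cases "X ! i") (auto simp: query_op_def flip_def norm_minus_commute)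

lemma mult_le_half_sum_squares:
  fixes x y z :: real
  shows "(x + z) * y \<le> (x\<^sup>2 + z\<^sup>2) / 2 + y\<^sup>2"
proof -
  have "(x\<^sup>2 + z\<^sup>2) / 2 + y\<^sup>2 - (x + z) * y = ((x - z)\<^sup>2 + (x + z - 2 * y)\<^sup>2) / 4"
    by (simp add: power2_eq_square field_simps)
  moreover have "0 \<le> ((x - z)\<^sup>2 + (x + z - 2 * y)\<^sup>2) / 4" by simp
  ultimately show ?thesis by linarith
qed

lemma cmod_inner_on_query_op_flip_diff:
  assumes "i < N" "length X = N"
  shows "cmod (inner_on (qbasis N M) (query_op X v) c
                 - inner_on (qbasis N M) (query_op (flip X i) v) c)
           \<le> sqnorm_on (qblock M i) v + sqnorm_on (qblock M i) c"
proof -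
  let ?e = "\<lambda>k. query_op X v k - query_op (flip X i) v k"
  let ?d = "\<lambda>k. cmod (?e k) * cmod (c k)"
  have "cmod (inner_on (qbasis N M) (query_op X v) c
                - inner_on (qbasis N M) (query_op (flip X i) v) c)
          = cmod (\<Sum>k\<in>qbasis N M. cnj (?e k) * c k)"
    unfolding inner_on_def by (simp add: sum_subtractf algebra_simps)
  also have "\<dots> \<le> (\<Sum>k\<in>qbasis N M. ?d k)"
    by (rule order_trans[OF norm_sum]) (simp add: norm_mult del: complex_cnj_diff)
  also have "\<dots> = (\<Sum>k\<in>qblock M i. ?d k)"
    using assms by (intro sum.mono_neutral_right)
      (auto simp: qblock_def qbasis_def mem_Times_iff cmod_query_op_flip_diff)
  also have "\<dots> \<le> (\<Sum>k\<in>qblock M i.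
                   ((cmod (v k))\<^sup>2 + (cmod (v (answer_flip k)))\<^sup>2) / 2 + (cmod (c k))\<^sup>2)"
  proof (intro sum_mono)
    fix k assume "k \<in> qblock M i"
    then have "fst k = i" by (auto simp: qblock_def)
    then have "?d k = cmod (v k - v (answer_flip k)) * cmod (c k)"
      using assms by (simp add: cmod_query_op_flip_diff)
    also have "\<dots> \<le> (cmod (v k) + cmod (v (answer_flip k))) * cmod (c k)"
      by (intro mult_right_mono norm_triangle_ineq4) simp
    finally show "?d k \<le> ((cmod (v k))\<^sup>2 + (cmod (v (answer_flip k)))\<^sup>2) / 2 + (cmod (c k))\<^sup>2"
      using mult_le_half_sum_squares by (rule order_trans)
  qed
  also have "\<dots> = sqnorm_on (qblock M i) v + sqnorm_on (qblock M i) c"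
    unfolding sqnorm_on_def sum.distrib sum_divide_distrib[symmetric]
      sum_qblock_answer_flip[of "\<lambda>k. (cmod (v k))\<^sup>2"] by simp
  finally show ?thesis .
qed

lemma finite_cube [simp]: "finite (cube N)"
  using finite_lists_length_eq[of "UNIV :: bool set" N] by (simp add: cube_def)

lemma card_cube: "card (cube N) = 2 ^ N"
  using card_lists_length_eq[of "UNIV :: bool set" N] by (simp add: cube_def)

lemma flip_flip: "i < length X \<Longrightarrow> flip (flip X i) i = X"
  unfolding flip_def by simp

lemma length_flip [simp]: "length (flip X i) = length X"
  unfolding flip_def by simp

lemma sum_cube_flip: "i < N \<Longrightarrow> (\<Sum>X\<in>cube N. h (flip X i)) = (\<Sum>X\<in>cube N. h X)"
  by (rule sum.reindex_bij_witness[where i="\<lambda>X. flip X i" and j="\<lambda>X. flip X i"])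
     (auto simp: flip_flip cube_def)

section \<open>The hybrid argument\<close>

locale query_algorithm =
  fixes N M T :: nat and Us :: "nat \<Rightarrow> qidx \<Rightarrow> qidx \<Rightarrow> complex"
    and psi0 :: "qidx \<Rightarrow> complex" and A :: "qidx set"
  assumes query_alg: "query_alg N M T Us psi0 A"
begin

abbreviation S :: "qidx set" where "S \<equiv> qbasis N M"

definition psi :: "bool list \<Rightarrow> nat \<Rightarrow> qidx \<Rightarrow> complex" where
  "psi X t = run S Us X psi0 t"

text \<open>The accepting part of the final state, run back through the last k layers
  \<open>O\<^sub>X U\<^sup>*\<close>.\<close>

fun backward :: "bool list \<Rightarrow> nat \<Rightarrow> qidx \<Rightarrow> complex" where
  "backward X 0 = restrict_to A (psi X T)"
| "backward X (Suc k) = query_op X (mat_app S (mat_adj (Us (T - k))) (backward X k))"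

definition pre_query :: "bool list \<Rightarrow> nat \<Rightarrow> qidx \<Rightarrow> complex" where
  "pre_query X t = mat_app S (mat_adj (Us (Suc t))) (backward X (T - Suc t))"

definition overlap :: "bool list \<Rightarrow> bool list \<Rightarrow> complex" where
  "overlap X Y = inner_on A (psi Y T) (psi X T)"

lemma unitary_Us: "t \<le> T \<Longrightarrow> unitary_on S (Us t)"
  using query_alg unfolding query_alg_def by auto

lemma accepting_subset: "A \<subseteq> S"
  using query_alg unfolding query_alg_def by auto

lemma sqnorm_on_psi: "t \<le> T \<Longrightarrow> sqnorm_on S (psi X t) = 1"
proof (induction t)
  case 0
  then show ?case
    using query_alg unitary_Us[of 0]
    by (simp add: psi_def sqnorm_on_unitary) (simp add: sqnorm_on_def query_alg_def)
next
  case (Suc t)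
  then show ?case
    using unitary_Us[of "Suc t"] by (simp add: psi_def sqnorm_on_unitary sqnorm_on_query_op)
qed

lemma sqnorm_on_backward_le: "sqnorm_on S (backward X k) \<le> 1"
proof (induction k)
  case 0
  then show ?case using sqnorm_on_restrict_to_le[of S A "psi X T"] sqnorm_on_psi[of T X] by simp
next
  case (Suc k)
  then show ?case
    using sqnorm_on_mat_adj_le[OF unitary_Us, of "T - k" "backward X k"]
    by (simp add: sqnorm_on_query_op)
qed

lemma sqnorm_on_pre_query_le: "t < T \<Longrightarrow> sqnorm_on S (pre_query X t) \<le> 1"
  unfolding pre_query_def using sqnorm_on_mat_adj_le unitary_Us sqnorm_on_backward_le
  by (meson Suc_leI finite_qbasis order_trans)

lemma backward_Suc_eq:
  assumes "t < T"
  shows "backward X (T - t) = query_op X (pre_query X t)"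
proof -
  have "T - t = Suc (T - Suc t)" using assms by simp
  then show ?thesis using assms by (simp add: pre_query_def)
qed

lemma inner_on_psi_backward_step:
  assumes "t < T"
  shows "inner_on S (psi Y t) (backward X (T - t))
           - inner_on S (psi Y (Suc t)) (backward X (T - Suc t))
       = inner_on S (query_op X (psi Y t)) (pre_query X t)
           - inner_on S (query_op Y (psi Y t)) (pre_query X t)"
  using assms
  by (simp add: psi_def backward_Suc_eq inner_on_query_op inner_on_mat_app_left pre_query_def)

lemma overlap_diff_eq_sum:
  "overlap X X - overlap X Y
     = (\<Sum>t<T. inner_on S (query_op X (psi Y t)) (pre_query X t)
               - inner_on S (query_op Y (psi Y t)) (pre_query X t))"
proof -
  define a where "a Z t = inner_on S (psi Z t) (backward X (T - t))" for Z t
  have telescope: "(\<Sum>t<T. a Z t - a Z (Suc t)) = a Z 0 - a Z T" for Z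
    by (rule sum_lessThan_telescope')
  have "overlap X Z = a Z T" for Z
    unfolding overlap_def a_def using accepting_subset by (simp add: inner_on_restrict_to)
  moreover have "a X 0 = a Y 0"
    by (simp add: a_def psi_def)
  moreover have "(\<Sum>t<T. a X t - a X (Suc t)) = 0"
    unfolding a_def by (simp add: inner_on_psi_backward_step)
  ultimately show ?thesis
    using telescope[of X] telescope[of Y] by (simp add: a_def inner_on_psi_backward_step)
qed

lemma acc_prob_eq_overlap: "acc_prob N M T Us psi0 A X = Re (overlap X X)"
  unfolding acc_prob_def overlap_def inner_on_self by (simp add: sqnorm_on_def psi_def)

definition block_weight :: "nat \<Rightarrow> bool list \<Rightarrow> real" where
  "block_weight i X =
     (\<Sum>t<T. sqnorm_on (qblock M i) (psi X t) + sqnorm_on (qblock M i) (pre_query X t))"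

lemma cmod_overlap_diff_le:
  assumes "i < N" "X \<in> cube N"
  shows "cmod (overlap X X - overlap X (flip X i))
           \<le> (\<Sum>t<T. sqnorm_on (qblock M i) (psi (flip X i) t)
                     + sqnorm_on (qblock M i) (pre_query X t))"
  unfolding overlap_diff_eq_sum
proof (rule order_trans[OF norm_sum], rule sum_mono)
  fix t
  show "cmod (inner_on S (query_op X (psi (flip X i) t)) (pre_query X t)
              - inner_on S (query_op (flip X i) (psi (flip X i) t)) (pre_query X t))
          \<le> sqnorm_on (qblock M i) (psi (flip X i) t) + sqnorm_on (qblock M i) (pre_query X t)"
    using assms by (intro cmod_inner_on_query_op_flip_diff) (auto simp: cube_def)
qed

lemma acc_prob_flip_diff_le:
  assumes "i < N" "X \<in> cube N"
  shows "\<bar>acc_prob N M T Us psi0 A X - acc_prob N M T Us psi0 A (flip X i)\<bar>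
           \<le> block_weight i X + block_weight i (flip X i)"
proof -
  let ?Y = "flip X i"
  have Y: "?Y \<in> cube N" and YX: "flip ?Y i = X"
    using assms flip_flip by (auto simp: cube_def)
  have "acc_prob N M T Us psi0 A X - acc_prob N M T Us psi0 A ?Y
          = Re (overlap X X - overlap X ?Y) - Re (overlap ?Y ?Y - overlap ?Y X)"
    unfolding acc_prob_eq_overlap overlap_def
    using inner_on_commute[of A "psi X T" "psi ?Y T"] by simp
  then have "\<bar>acc_prob N M T Us psi0 A X - acc_prob N M T Us psi0 A ?Y\<bar>
               \<le> cmod (overlap X X - overlap X ?Y) + cmod (overlap ?Y ?Y - overlap ?Y X)"
    using abs_Re_le_cmod[of "overlap X X - overlap X ?Y"]
      abs_Re_le_cmod[of "overlap ?Y ?Y - overlap ?Y X"] by linarith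
  also have "\<dots> \<le> block_weight i X + block_weight i ?Y"
    using cmod_overlap_diff_le[OF assms] cmod_overlap_diff_le[OF assms(1) Y, unfolded YX]
    by (simp add: block_weight_def sum.distrib)
  finally show ?thesis .
qed

lemma sum_block_weight_le: "(\<Sum>i<N. block_weight i X) \<le> 2 * real T"
proof -
  have "(\<Sum>i<N. block_weight i X)
          = (\<Sum>t<T. sqnorm_on S (psi X t) + sqnorm_on S (pre_query X t))"
    unfolding block_weight_def sqnorm_on_qbasis_eq_sum_qblock sum.distrib[symmetric]
    by (rule sum.swap)
  also have "\<dots> \<le> (\<Sum>t<T. 2)"
  proof (rule sum_mono)
    fix t assume "t \<in> {..<T}"
    then show "sqnorm_on S (psi X t) + sqnorm_on S (pre_query X t) \<le> 2"
      using sqnorm_on_psi[of t X] sqnorm_on_pre_query_le[of t X] by simp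
  qed
  finally show ?thesis by simp
qed

theorem SumInf_acc_prob_le: "SumInf N (acc_prob N M T Us psi0 A) \<le> 4 * real T"
proof -
  let ?p = "acc_prob N M T Us psi0 A"
  have per_bit: "(\<Sum>X\<in>cube N. \<bar>?p X - ?p (flip X i)\<bar>)
                   \<le> 2 * (\<Sum>X\<in>cube N. block_weight i X)" if "i < N" for i
  proof -
    have "(\<Sum>X\<in>cube N. \<bar>?p X - ?p (flip X i)\<bar>)
            \<le> (\<Sum>X\<in>cube N. block_weight i X + block_weight i (flip X i))"
      using that by (intro sum_mono acc_prob_flip_diff_le)
    then show ?thesis using that by (simp add: sum.distrib sum_cube_flip)
  qed
  have "(\<Sum>i<N. \<Sum>X\<in>cube N. \<bar>?p X - ?p (flip X i)\<bar>)
          \<le> (\<Sum>i<N. 2 * (\<Sum>X\<in>cube N. block_weight i X))"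
    by (intro sum_mono per_bit) simp
  also have "\<dots> = 2 * (\<Sum>X\<in>cube N. \<Sum>i<N. block_weight i X)"
    unfolding sum_distrib_left[symmetric] by (rule arg_cong[where f="(*) 2"], rule sum.swap)
  also have "\<dots> \<le> 2 * (\<Sum>X\<in>cube N. 2 * real T)"
    by (intro mult_left_mono sum_mono sum_block_weight_le) simp
  also have "\<dots> = 2 * (2 * real T * 2 ^ N)"
    by (simp add: card_cube)
  finally show ?thesis
    unfolding SumInf_def Inf_def by (simp add: sum_divide_distrib[symmetric] field_simps)
qed

end

theorem lemma19:
  shows "\<exists>C::real. \<forall>(N::nat) (M::nat) (T::nat) Us psi0 A.
           query_alg N M T Us psi0 A \<longrightarrow>
           SumInf N (acc_prob N M T Us psi0 A) \<le> C * real T"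
  using query_algorithm.SumInf_acc_prob_le unfolding query_algorithm_def by blast

end
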